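(* Under the standing assumptions below, the relation $\preceq$ is a total order on $I$.
   Context: Standing assumptions: $I$ is a finite set of weighted constraints with default values on a finite domain $D$ (each constraint $c$ has a finite variable set $\mathrm{var}(c)$) such that distinct constraints have distinct variable sets, the hypergraph $\mathcal H(I)=(\mathrm{var}(I),\{\mathrm{var}(c)\mid c\in I\})$ is $\beta$-acyclic, and $(x_1,\dots,x_n)$ is a $\beta$-elimination order of $\mathcal H(I)$ (an enumeration of $\mathrm{var}(I)$ such that, for each $k$, $x_{k+1}$ is a nest point—i.e. the edges containing it are totally ordered by inclusion—of the hypergraph with vertices $\mathrm{var}(I)\setminus X_k$ and edges $\{e\setminus X_k\}\setminus\{\emptyset\}$). Let $X_k=\{x_1,\dots,x_k\}$ ($X_0=\emptyset$). For $c,d\in I$, write $c\prec d$ if there exists $k\in\{0,\dots,n\}$ with $\mathrm{var}(c)\setminus X_k\subsetneq\mathrm{var}(d)\setminus X_k$, and $c\preceq d$ if $c\prec d$ or $c=d$. *)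

theory Defs
  imports Main
begin

definition edges_of :: "('c \<Rightarrow> 'v set) \<Rightarrow> 'c set \<Rightarrow> 'v set set" where
  "edges_of var I = var ` I"

definition vars_of :: "('c \<Rightarrow> 'v set) \<Rightarrow> 'c set \<Rightarrow> 'v set" where
  "vars_of var I = \<Union> (var ` I)"

definition nest_point :: "'v set set \<Rightarrow> 'v \<Rightarrow> bool" where
  "nest_point E v \<longleftrightarrow> (\<forall>e\<in>E. \<forall>f\<in>E. v \<in> e \<and> v \<in> f \<longrightarrow> e \<subseteq> f \<or> f \<subseteq> e)"

definition remove_vertices :: "'v set set \<Rightarrow> 'v set \<Rightarrow> 'v set set" where
  "remove_vertices E X = (\<lambda>e. e - X) ` E - {{}}"

definition beta_elim_order :: "'v set \<Rightarrow> 'v set set \<Rightarrow> 'v list \<Rightarrow> bool" where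
  "beta_elim_order V E xs \<longleftrightarrow> distinct xs \<and> set xs = V \<and>
     (\<forall>k < length xs. xs ! k \<in> V - set (take k xs) \<and>
        nest_point (remove_vertices E (set (take k xs))) (xs ! k))"

definition beta_acyclic :: "'v set \<Rightarrow> 'v set set \<Rightarrow> bool" where
  "beta_acyclic V E \<longleftrightarrow> (\<exists>xs. beta_elim_order V E xs)"

definition prec :: "('c \<Rightarrow> 'v set) \<Rightarrow> 'v list \<Rightarrow> 'c \<Rightarrow> 'c \<Rightarrow> bool" where
  "prec var xs c d \<longleftrightarrow> (\<exists>k \<le> length xs. var c - set (take k xs) \<subset> var d - set (take k xs))"

definition preceq_rel :: "('c \<Rightarrow> 'v set) \<Rightarrow> 'v list \<Rightarrow> 'c set \<Rightarrow> ('c \<times> 'c) set" where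
  "preceq_rel var xs I = {(c, d). c \<in> I \<and> d \<in> I \<and> (prec var xs c d \<or> c = d)}"

end

theory Submission
  imports Defs
begin

text \<open>
  Only two hypotheses matter: every variable of a constraint occurs in xs, and distinct
  constraints have distinct variable sets.
  Removing the variables of xs one by one, two distinct variable sets eventually become
  equal, and at the last index k where they still differ they differ only in xs ! k, so one
  strictly contains the other. Hence any two distinct constraints are comparable, and
  strict inclusion, once reached, persists, which gives asymmetry. For transitivity,
  compare the last indices at which c, d and d, e differ: if they differ, the later
  agreement turns the earlier strict inclusion into one between c and e; if they coincide,
  xs ! k would have to lie in var d and outside it at the same time.
\<close>

lemma ex_last_before_change:
  fixes P :: "nat \<Rightarrow> bool"
  assumes "a \<le> b" "P a" "\<not> P b"
  shows "\<exists>k. a \<le> k \<and> k < b \<and> P k \<and> \<not> P (Suc k)"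
proof (rule ccontr)
  assume none: "\<not> ?thesis"
  have "P b" using assms(1,2)
  proof (induction b rule: dec_induct)
    case (step n)
    then show ?case using none by blast
  qed
  with assms(3) show False by contradiction
qed

lemma diff_take_subset_mono:
  assumes "A - set (take k xs) \<subseteq> B - set (take k xs)" "k \<le> k'"
  shows "A - set (take k' xs) \<subseteq> B - set (take k' xs)"
  using assms set_take_subset_set_take[OF assms(2), of xs] by blast

lemma diff_take_eq_mono:
  assumes "A - set (take k xs) = B - set (take k xs)" "k \<le> k'"
  shows "A - set (take k' xs) = B - set (take k' xs)"
  using diff_take_subset_mono[of A k xs B k'] diff_take_subset_mono[of B k xs A k'] assms
  by blast

lemma ex_last_difference:
  assumes "A \<subseteq> set xs" "B \<subseteq> set xs" "A - set (take k xs) \<noteq> B - set (take k xs)"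
  shows "\<exists>j\<ge>k. j < length xs \<and> A - set (take j xs) \<noteq> B - set (take j xs)
           \<and> A - set (take (Suc j) xs) = B - set (take (Suc j) xs)"
proof -
  have no_difference_at_end: "A - set (take i xs) = B - set (take i xs)" if "length xs \<le> i" for i
    using assms(1,2) that by auto
  then have "k \<le> length xs" using assms(3) by (meson nat_le_linear)
  moreover note no_difference_at_end[of "length xs"]
  ultimately show ?thesis
    using ex_last_before_change[of k "length xs" "\<lambda>i. A - set (take i xs) \<noteq> B - set (take i xs)"]
      assms(3) by blast
qed

lemma diff_take_Suc:
  "j < length xs \<Longrightarrow> A - set (take (Suc j) xs) = A - set (take j xs) - {xs ! j}"
  by (auto simp: take_Suc_conv_app_nth)

lemma last_difference_psubset:
  assumes "j < length xs" "A - set (take j xs) \<noteq> B - set (take j xs)"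
    "A - set (take (Suc j) xs) = B - set (take (Suc j) xs)"
  shows "A - set (take j xs) \<subset> B - set (take j xs) \<or> B - set (take j xs) \<subset> A - set (take j xs)"
  using assms by (auto simp: diff_take_Suc)

lemma last_difference_witness:
  assumes "j < length xs" "A - set (take j xs) \<subset> B - set (take j xs)"
    "A - set (take (Suc j) xs) = B - set (take (Suc j) xs)"
  shows "xs ! j \<in> B - set (take j xs) - A"
  using assms by (auto simp: diff_take_Suc)

lemma precI:
  "k \<le> length xs \<Longrightarrow> var c - set (take k xs) \<subset> var d - set (take k xs) \<Longrightarrow> prec var xs c d"
  unfolding prec_def by blast

lemma prec_last_strict:
  assumes "prec var xs c d" "var c \<subseteq> set xs" "var d \<subseteq> set xs"
  obtains j where "j < length xs" "var c - set (take j xs) \<subset> var d - set (take j xs)"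
    "var c - set (take (Suc j) xs) = var d - set (take (Suc j) xs)"
proof -
  obtain k where k: "var c - set (take k xs) \<subset> var d - set (take k xs)"
    using assms(1) unfolding prec_def by blast
  then obtain j where "k \<le> j" "j < length xs"
      "var c - set (take (Suc j) xs) = var d - set (take (Suc j) xs)"
      "var c - set (take j xs) \<noteq> var d - set (take j xs)"
    using ex_last_difference[OF assms(2,3), of k] by blast
  moreover have "var c - set (take j xs) \<subseteq> var d - set (take j xs)"
    using diff_take_subset_mono k \<open>k \<le> j\<close> by blast
  ultimately show ?thesis using that by blast
qed

lemma prec_asym:
  assumes "prec var xs c d"
  shows "\<not> prec var xs d c"
proof
  assume "prec var xs d c"
  then obtain j where j: "var d - set (take j xs) \<subset> var c - set (take j xs)"
    unfolding prec_def by blast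
  obtain i where i: "var c - set (take i xs) \<subset> var d - set (take i xs)"
    using assms unfolding prec_def by blast
  show False
  proof (cases "i \<le> j")
    case True
    then show False using diff_take_subset_mono[of "var c" i xs "var d" j] i j by blast
  next
    case False
    then show False using diff_take_subset_mono[of "var d" j xs "var c" i] i j by auto
  qed
qed

lemma prec_total:
  assumes "var c \<subseteq> set xs" "var d \<subseteq> set xs" "var c \<noteq> var d"
  shows "prec var xs c d \<or> prec var xs d c"
proof -
  obtain j where j: "j < length xs" "var c - set (take j xs) \<noteq> var d - set (take j xs)"
      "var c - set (take (Suc j) xs) = var d - set (take (Suc j) xs)"
    using ex_last_difference[OF assms(1,2), of 0] assms(3) by auto
  have "j \<le> length xs" using j(1) by simp
  then show ?thesis
    using last_difference_psubset[OF j] precI[of j xs var c d] precI[of j xs var d c] by blast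
qed

lemma prec_trans:
  assumes "var c \<subseteq> set xs" "var d \<subseteq> set xs" "var e \<subseteq> set xs"
    and cd: "prec var xs c d" and de: "prec var xs d e"
  shows "prec var xs c e"
proof -
  obtain i where i: "i < length xs" "var c - set (take i xs) \<subset> var d - set (take i xs)"
      "var c - set (take (Suc i) xs) = var d - set (take (Suc i) xs)"
    using prec_last_strict[OF cd assms(1,2)] .
  obtain j where j: "j < length xs" "var d - set (take j xs) \<subset> var e - set (take j xs)"
      "var d - set (take (Suc j) xs) = var e - set (take (Suc j) xs)"
    using prec_last_strict[OF de assms(2,3)] .
  consider "j < i" | "i < j" | "i = j" by linarith
  then show ?thesis
  proof cases
    case 1
    then have "var d - set (take i xs) = var e - set (take i xs)"
      using diff_take_eq_mono[OF j(3)] by simp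
    with i(2) have "var c - set (take i xs) \<subset> var e - set (take i xs)" by simp
    with i(1) show ?thesis by (intro precI[of i]) simp_all
  next
    case 2
    then have "var c - set (take j xs) = var d - set (take j xs)"
      using diff_take_eq_mono[OF i(3)] by simp
    with j(2) have "var c - set (take j xs) \<subset> var e - set (take j xs)" by simp
    with j(1) show ?thesis by (intro precI[of j]) simp_all
  next
    case 3
    have "xs ! i \<in> var d" using last_difference_witness[OF i] by blast
    moreover have "xs ! i \<notin> var d" using last_difference_witness[OF j] 3 by blast
    ultimately show ?thesis by contradiction
  qed
qed

theorem lemma3:
  fixes I :: "'c set" and var :: "'c \<Rightarrow> 'v set" and xs :: "'v list"
  assumes "finite I"
    and "\<forall>c\<in>I. finite (var c)"
    and "inj_on var I"
    and "beta_acyclic (vars_of var I) (edges_of var I)"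
    and "beta_elim_order (vars_of var I) (edges_of var I) xs"
  shows "linear_order_on I (preceq_rel var xs I)"
proof -
  have vars: "var c \<subseteq> set xs" if "c \<in> I" for c
    using assms(5) that unfolding beta_elim_order_def vars_of_def by auto
  show ?thesis
    unfolding linear_order_on_def partial_order_on_def preorder_on_def
  proof (intro conjI)
    show "preceq_rel var xs I \<subseteq> I \<times> I" "refl_on I (preceq_rel var xs I)"
      unfolding preceq_rel_def refl_on_def by auto
    show "trans (preceq_rel var xs I)"
      unfolding trans_def preceq_rel_def using prec_trans[of var _ xs] vars by blast
    show "antisym (preceq_rel var xs I)"
      unfolding antisym_def preceq_rel_def using prec_asym[of var xs] by blast
    show "total_on I (preceq_rel var xs I)"
      unfolding total_on_def preceq_rel_def
      using prec_total[of var _ xs] vars inj_on_contraD[OF assms(3)] by blast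
  qed
qed

end
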